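(* Let $\Omega$ be a strip domain of width $\gamma$, and let $f$ be a slice regular function on $\Omega$, continuous on $\overline\Omega$. Suppose that $|f(q)|\le N\exp(e^{k|q|})$ for all $q\in\Omega$, for some positive constants $N$ and $k<\pi/\gamma$. If there exists $M\ge0$ such that $|f|\le M$ on $\partial\Omega$, then $|f|\le M$ on $\Omega$.
   Context: $\mathbb{H}$ denotes the quaternions with Euclidean norm $|q|$; $\mathbb{S}=\{ix_1+jx_2+kx_3: x_1^2+x_2^2+x_3^2=1\}$; for $I\in\mathbb{S}$, $L_I=\mathbb{R}+\mathbb{R}I$ and $\Omega_I=\Omega\cap L_I$. A function $f:\Omega\to\mathbb{H}$ on an open set $\Omega$ is slice regular if for every $I\in\mathbb{S}$ its restriction $f_I$ to $\Omega_I$ satisfies $\frac12\left(\frac{\partial}{\partial x}+I\frac{\partial}{\partial y}\right)f_I(x+yI)=0$. A domain $\Omega$ is a slice domain if $\Omega\cap\mathbb{R}\ne\emptyset$ and each $\Omega_I$ is a domain in $L_I$. A slice domain $\Omega$ is a strip domain if for every $I\in\mathbb{S}$ there exist a (real) line $\ell_I$ in the plane $L_I$ and $\gamma_I>0$ such that $\Omega_I=\{z\in L_I: \mathrm{dist}(z,\ell_I)<\gamma_I/2\}$; its width is $\sup_{I\in\mathbb{S}}\gamma_I$. *)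

theory Defs
  imports "HOL-Analysis.Analysis"
begin

text \<open>Quaternions are modelled as \<open>real^4\<close> with components
  \<open>q$0 + q$1 i + q$2 j + q$3 k\<close>; the norm of \<open>real^4\<close> is the Euclidean norm.\<close>

type_synonym quat = "real^4"

definition qmul :: "quat \<Rightarrow> quat \<Rightarrow> quat" where
  "qmul p q = (\<chi> n.
     if n = 0 then p$0*q$0 - p$1*q$1 - p$2*q$2 - p$3*q$3
     else if n = 1 then p$0*q$1 + p$1*q$0 + p$2*q$3 - p$3*q$2
     else if n = 2 then p$0*q$2 - p$1*q$3 + p$2*q$0 + p$3*q$1
     else p$0*q$3 + p$1*q$2 - p$2*q$1 + p$3*q$0)"

definition qone :: quat where
  "qone = (\<chi> n. if n = 0 then 1 else 0)"

definition imag_units :: "quat set" where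
  "imag_units = {I. I$0 = 0 \<and> (I$1)^2 + (I$2)^2 + (I$3)^2 = 1}"

definition slpt :: "quat \<Rightarrow> real \<Rightarrow> real \<Rightarrow> quat" where
  "slpt I x y = x *\<^sub>R qone + y *\<^sub>R I"

definition Lplane :: "quat \<Rightarrow> quat set" where
  "Lplane I = {slpt I x y | x y. True}"

definition slice_regular :: "quat set \<Rightarrow> (quat \<Rightarrow> quat) \<Rightarrow> bool" where
  "slice_regular \<Omega> f \<longleftrightarrow> open \<Omega> \<and>
     (\<forall>I\<in>imag_units. \<forall>x y. slpt I x y \<in> \<Omega> \<longrightarrow>
        (\<exists>Dx Dy. ((\<lambda>(s,t). f (slpt I s t)) has_derivative (\<lambda>(h,k). h *\<^sub>R Dx + k *\<^sub>R Dy)) (at (x,y))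
                 \<and> (1/2::real) *\<^sub>R (Dx + qmul I Dy) = 0))"

definition slice_domain :: "quat set \<Rightarrow> bool" where
  "slice_domain \<Omega> \<longleftrightarrow> open \<Omega> \<and> connected \<Omega> \<and>
     (\<exists>x::real. x *\<^sub>R qone \<in> \<Omega>) \<and>
     (\<forall>I\<in>imag_units. connected (\<Omega> \<inter> Lplane I))"

definition line_in :: "quat \<Rightarrow> quat set \<Rightarrow> bool" where
  "line_in I l \<longleftrightarrow> (\<exists>p v. p \<in> Lplane I \<and> v \<in> Lplane I \<and> v \<noteq> 0 \<and>
                             l = {p + t *\<^sub>R v | t. True})"

text \<open>\<open>\<Omega>\<close> is a strip domain of width \<open>\<gamma>\<close>: a slice domain with strips \<open>\<Omega>_I\<close> of widths
  \<open>\<gamma>_I\<close>, and \<open>\<gamma> = sup_I \<gamma>_I\<close> (least upper bound, in particular finite).\<close>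
definition strip_domain_width :: "quat set \<Rightarrow> real \<Rightarrow> bool" where
  "strip_domain_width \<Omega> \<gamma> \<longleftrightarrow> slice_domain \<Omega> \<and>
     (\<exists>g :: quat \<Rightarrow> real.
        (\<forall>I\<in>imag_units. g I > 0 \<and>
            (\<exists>l. line_in I l \<and> \<Omega> \<inter> Lplane I = {z \<in> Lplane I. infdist z l < g I / 2})) \<and>
        (\<forall>I\<in>imag_units. g I \<le> \<gamma>) \<and>
        (\<forall>b. (\<forall>I\<in>imag_units. g I \<le> b) \<longrightarrow> \<gamma> \<le> b))"

end

theory Submission
  imports Defs "HOL-Complex_Analysis.Conformal_Mappings"
begin

(* The proof reduces the quaternionic statement to a classical one-variable result.
   For q in Omega choose the slice through q and a = f q: Phragmen--Lindelof gives
   |f q|^2 = |slice_coord I a (f q)| <= M |f q|, hence |f q| <= M. *)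

section \<open>The Phragmen--Lindelof principle for a horizontal strip\<close>

lemma closure_strip:
  assumes "b > 0"
  shows "closure {z::complex. \<bar>Im z\<bar> < b} = {z. \<bar>Im z\<bar> \<le> b}"
proof -
  define S T where "S = {z::complex. \<i> \<bullet> z < b}" and "T = {z::complex. (-\<i>) \<bullet> z < b}"
  have "open S" "open T" unfolding S_def T_def by (rule open_halfspace_lt)+
  have "convex S" "convex T" unfolding S_def T_def by (rule convex_halfspace_lt)+
  have "0 \<in> S \<inter> T" using assms by (simp add: S_def T_def)
  then have "closure (S \<inter> T) = closure S \<inter> closure T"
    using \<open>convex S\<close> \<open>convex T\<close> rel_interior_open[OF \<open>open S\<close>] rel_interior_open[OF \<open>open T\<close>]
    by (intro closure_Int_convex) auto
  moreover have "closure S \<inter> closure T = {z. \<bar>Im z\<bar> \<le> b}"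
    unfolding S_def T_def by (subst (1 2) closure_halfspace_lt) auto
  moreover have "S \<inter> T = {z. \<bar>Im z\<bar> < b}" by (auto simp: S_def T_def)
  ultimately show ?thesis by simp
qed

lemma doubly_exponential_decay:
  fixes A B e c d L :: real
  assumes "A > 0" "B \<ge> 0" "e > 0" "c > 0" "d > c" "L > 0"
  shows "\<exists>T. \<forall>t\<ge>T. A * exp (B * exp (c * t) - e * exp (d * t)) \<le> L"
proof -
  define T where "T = max (ln ((B+1)/e) / (d-c)) (ln (A/L) / c)"
  have "A * exp (B * exp (c * t) - e * exp (d * t)) \<le> L" if t: "t \<ge> T" for t
  proof -
    have "(d - c) * t \<ge> ln ((B+1)/e)"
      using t assms unfolding T_def by (simp add: field_simps)
    then have "exp ((d-c)*t) \<ge> (B+1)/e"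
      using assms by (metis exp_le_cancel_iff exp_ln divide_pos_pos add_nonneg_pos zero_less_one)
    then have "e * exp ((d-c)*t) \<ge> B + 1" using assms by (simp add: field_simps)
    then have "e * exp ((d-c)*t) * exp (c*t) \<ge> (B + 1) * exp (c*t)"
      by (simp add: mult_right_mono)
    moreover have "exp (d*t) = exp ((d-c)*t) * exp (c*t)"
      by (simp add: exp_add[symmetric] algebra_simps)
    ultimately have "B * exp (c * t) - e * exp (d * t) \<le> - exp (c*t)"
      by (simp add: algebra_simps)
    also have "\<dots> \<le> - (c*t)" using exp_ge_add_one_self[of "c*t"] by linarith
    also have "\<dots> \<le> - ln (A/L)" using t assms unfolding T_def by (simp add: field_simps)
    finally have "exp (B * exp (c * t) - e * exp (d * t)) \<le> exp (- ln (A/L))" by simp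
    also have "\<dots> = L / A" using assms by (simp add: exp_minus)
    finally have "exp (B * exp (c * t) - e * exp (d * t)) \<le> L / A" .
    then show ?thesis using assms by (simp add: field_simps)
  qed
  then show ?thesis by blast
qed

definition strip_damping :: "real \<Rightarrow> real \<Rightarrow> complex \<Rightarrow> complex" where
  "strip_damping d \<epsilon> z = exp (-(of_real \<epsilon> * (exp (of_real d * z) + exp (-(of_real d * z)))))"

lemma holomorphic_strip_damping: "strip_damping d \<epsilon> holomorphic_on S"
  unfolding strip_damping_def by (intro holomorphic_intros)

lemma norm_strip_damping:
  "norm (strip_damping d \<epsilon> z)
     = exp (-(\<epsilon> * ((exp (d * Re z) + exp (-(d * Re z))) * cos (d * Im z))))"
  unfolding strip_damping_def by (simp add: Re_exp algebra_simps)

lemma norm_strip_damping_le: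
  assumes "d > 0" "b > 0" "d * b < pi/2" "\<epsilon> \<ge> 0" "\<bar>Im z\<bar> \<le> b"
  shows "norm (strip_damping d \<epsilon> z) \<le> exp (-(\<epsilon> * cos (d * b) * exp (d * \<bar>Re z\<bar>)))"
proof -
  have "d * b \<le> pi" using assms pi_gt_zero by linarith
  then have "cos (d * b) \<le> cos (\<bar>d * Im z\<bar>)"
    using assms by (intro cos_monotone_0_pi_le) (auto simp: abs_mult intro: mult_left_mono)
  then have cos_ge: "cos (d * b) \<le> cos (d * Im z)" by simp
  have "0 < d * b" using assms by simp
  then have cos_pos: "cos (d * b) > 0"
    using assms(3) pi_gt_zero by (intro cos_gt_zero_pi) linarith+
  have exp_ge: "exp (d * \<bar>Re z\<bar>) \<le> exp (d * Re z) + exp (-(d * Re z))"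
    by (cases "Re z \<ge> 0") (auto simp: add_pos_nonneg)
  have "cos (d * b) * exp (d * \<bar>Re z\<bar>) \<le> cos (d * Im z) * (exp (d * Re z) + exp (-(d * Re z)))"
    using cos_ge cos_pos exp_ge by (intro mult_mono) auto
  from mult_left_mono[OF this \<open>\<epsilon> \<ge> 0\<close>] show ?thesis
    unfolding norm_strip_damping by (simp add: algebra_simps)
qed

lemma norm_strip_damping_le_1:
  assumes "d > 0" "b > 0" "d * b < pi/2" "\<epsilon> \<ge> 0" "\<bar>Im z\<bar> \<le> b"
  shows "norm (strip_damping d \<epsilon> z) \<le> 1"
proof -
  have "0 < d * b" using assms by simp
  then have "cos (d * b) > 0" using assms(3) pi_gt_zero by (intro cos_gt_zero_pi) linarith+
  then have "exp (-(\<epsilon> * cos (d * b) * exp (d * \<bar>Re z\<bar>))) \<le> 1"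
    using assms(4) by simp
  with norm_strip_damping_le[OF assms] show ?thesis by linarith
qed

lemma damped_small_far_out:
  fixes h :: "complex \<Rightarrow> complex"
  assumes growth: "\<And>z. \<bar>Im z\<bar> < b \<Longrightarrow> norm (h z) \<le> A * exp (B * exp (c * norm z))"
    and "A > 0" "B \<ge> 0" "c > 0" "c < d" "b > 0" "d * b < pi/2" "\<epsilon> > 0" "L > 0"
  obtains R where "\<And>z. \<bar>Im z\<bar> < b \<Longrightarrow> R \<le> \<bar>Re z\<bar> \<Longrightarrow> norm (h z * strip_damping d \<epsilon> z) \<le> L"
proof -
  define \<delta> where "\<delta> = cos (d * b)"
  define B' where "B' = B * exp (c * b)"
  have "0 < d * b" using assms by simp
  then have \<delta>: "\<delta> > 0" unfolding \<delta>_def using assms(7) pi_gt_zero by (intro cos_gt_zero_pi) linarith+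
  obtain R where R: "\<And>t. t \<ge> R \<Longrightarrow> A * exp (B' * exp (c * t) - (\<epsilon> * \<delta>) * exp (d * t)) \<le> L"
    using doubly_exponential_decay[of A B' "\<epsilon> * \<delta>" c d L] assms \<delta> unfolding B'_def by auto
  have "norm (h z * strip_damping d \<epsilon> z) \<le> L" if z: "\<bar>Im z\<bar> < b" "R \<le> \<bar>Re z\<bar>" for z
  proof -
    have "norm z \<le> \<bar>Re z\<bar> + b" using cmod_le[of z] z by simp
    then have "exp (c * norm z) \<le> exp (c * b) * exp (c * \<bar>Re z\<bar>)"
      using assms by (simp add: exp_add[symmetric] distrib_left[symmetric])
    then have "B * exp (c * norm z) \<le> B' * exp (c * \<bar>Re z\<bar>)"
      unfolding B'_def using assms by (metis mult.assoc mult_left_mono)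
    then have "A * exp (B * exp (c * norm z)) * exp (-(\<epsilon> * \<delta> * exp (d * \<bar>Re z\<bar>)))
        \<le> A * exp (B' * exp (c * \<bar>Re z\<bar>) - (\<epsilon> * \<delta>) * exp (d * \<bar>Re z\<bar>))"
      using assms by (simp add: exp_diff exp_minus divide_simps)
    also have "\<dots> \<le> L" using R z by auto
    finally have bound: "A * exp (B * exp (c * norm z)) * exp (-(\<epsilon> * \<delta> * exp (d * \<bar>Re z\<bar>))) \<le> L" .
    have "norm (h z * strip_damping d \<epsilon> z) = norm (h z) * norm (strip_damping d \<epsilon> z)"
      by (simp add: norm_mult)
    also have "\<dots> \<le> A * exp (B * exp (c * norm z)) * exp (-(\<epsilon> * \<delta> * exp (d * \<bar>Re z\<bar>)))"
      using growth[OF z(1)] norm_strip_damping_le[of d b \<epsilon> z] assms z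
      unfolding \<delta>_def by (intro mult_mono) auto
    finally show ?thesis using bound by simp
  qed
  then show ?thesis using that by blast
qed

text \<open>The damped function is bounded by \<open>K + \<eta>\<close> in the strip: apply the maximum modulus
  principle on a rectangle long enough that its short sides lie in the region where
  \<open>damped_small_far_out\<close> applies, while its long sides lie on the boundary lines.\<close>
lemma strip_damped_bound:
  fixes h :: "complex \<Rightarrow> complex"
  assumes "b > 0" and hol: "h holomorphic_on {z. \<bar>Im z\<bar> < b}"
    and cont: "continuous_on {z. \<bar>Im z\<bar> \<le> b} h"
    and boundary: "\<And>z. \<bar>Im z\<bar> = b \<Longrightarrow> norm (h z) \<le> K"
    and growth: "\<And>z. \<bar>Im z\<bar> < b \<Longrightarrow> norm (h z) \<le> A * exp (B * exp (c * norm z))"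
    and "A > 0" "B \<ge> 0" "c > 0" "c < d" "d * b < pi/2" "K \<ge> 0" "\<epsilon> > 0" "\<eta> > 0"
    and z0: "\<bar>Im z0\<bar> < b"
  shows "norm (h z0 * strip_damping d \<epsilon> z0) \<le> K + \<eta>"
proof -
  obtain R0 where far: "\<And>z. \<bar>Im z\<bar> < b \<Longrightarrow> R0 \<le> \<bar>Re z\<bar> \<Longrightarrow> norm (h z * strip_damping d \<epsilon> z) \<le> K + \<eta>"
    using damped_small_far_out[where h=h and d=d and \<epsilon>=\<epsilon> and L="K + \<eta>"] growth assms
    by (metis add_nonneg_pos)
  define R where "R = max R0 (\<bar>Re z0\<bar> + 1)"
  define U where "U = {z. \<bar>Re z\<bar> < R \<and> \<bar>Im z\<bar> < b}"
  have "open U" unfolding U_def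
    by (intro open_Collect_conj open_Collect_less continuous_intros)
  have "closed {z. \<bar>Re z\<bar> \<le> R \<and> \<bar>Im z\<bar> \<le> b}"
    by (intro closed_Collect_conj closed_Collect_le continuous_intros)
  then have closure_U: "closure U \<subseteq> {z. \<bar>Re z\<bar> \<le> R \<and> \<bar>Im z\<bar> \<le> b}"
    by (rule closure_minimal[rotated]) (auto simp: U_def)
  have "bounded U"
    by (rule bounded_subset[OF bounded_cball[of 0 "R + b"]])
       (auto simp: U_def dist_norm intro!: order_trans[OF cmod_le])
  have "(\<lambda>z. h z * strip_damping d \<epsilon> z) holomorphic_on interior U"
    unfolding interior_open[OF \<open>open U\<close>]
    by (intro holomorphic_on_mult holomorphic_strip_damping holomorphic_on_subset[OF hol])
       (auto simp: U_def)
  moreover have "continuous_on (closure U) (\<lambda>z. h z * strip_damping d \<epsilon> z)"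
    using closure_U holomorphic_on_imp_continuous_on[OF holomorphic_strip_damping]
    by (intro continuous_intros continuous_on_subset[OF cont]) auto
  moreover have "norm (h y * strip_damping d \<epsilon> y) \<le> K + \<eta>" if y: "y \<in> frontier U" for y
  proof -
    have "y \<in> closure U" "y \<notin> U" using y \<open>open U\<close> by (auto simp: frontier_def interior_open)
    then consider "\<bar>Im y\<bar> = b" | "\<bar>Im y\<bar> < b" "R0 \<le> \<bar>Re y\<bar>"
      using closure_U by (force simp: U_def R_def)
    then show ?thesis
    proof cases
      case 1
      have "norm (h y * strip_damping d \<epsilon> y) \<le> K * 1"
        unfolding norm_mult using boundary[OF 1] norm_strip_damping_le_1[of d b \<epsilon> y] 1 assms
        by (intro mult_mono) auto
      then show ?thesis using assms by simp
    qed (rule far)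
  qed
  moreover have "z0 \<in> U" using z0 by (auto simp: U_def R_def)
  ultimately show ?thesis using maximum_modulus_frontier[OF _ _ \<open>bounded U\<close>] by blast
qed

theorem phragmen_lindelof_strip:
  fixes h :: "complex \<Rightarrow> complex"
  assumes "b > 0" and hol: "h holomorphic_on {z. \<bar>Im z\<bar> < b}"
    and cont: "continuous_on {z. \<bar>Im z\<bar> \<le> b} h"
    and boundary: "\<And>z. \<bar>Im z\<bar> = b \<Longrightarrow> norm (h z) \<le> K"
    and growth: "\<And>z. \<bar>Im z\<bar> < b \<Longrightarrow> norm (h z) \<le> A * exp (B * exp (c * norm z))"
    and "A > 0" "B \<ge> 0" "c > 0" "c * b < pi/2" "K \<ge> 0"
    and z0: "\<bar>Im z0\<bar> < b"
  shows "norm (h z0) \<le> K"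
proof -
  define d where "d = (c + pi/(2*b))/2"
  have "c < d" "d * b < pi/2" using assms unfolding d_def by (simp_all add: field_simps)
  define r where "r = (exp (d * Re z0) + exp (-(d * Re z0))) * cos (d * Im z0)"
  have bound: "norm (h z0) \<le> K * exp (\<epsilon> * r)" if "\<epsilon> > 0" for \<epsilon>
  proof -
    have "norm (h z0) * exp (-(\<epsilon> * r)) \<le> K"
    proof (rule field_le_epsilon)
      fix \<eta> :: real assume "\<eta> > 0"
      from strip_damped_bound[OF assms(1) hol cont boundary growth _ _ _ \<open>c < d\<close> _ _ that this z0]
      show "norm (h z0) * exp (-(\<epsilon> * r)) \<le> K + \<eta>"
        using assms \<open>d * b < pi/2\<close> by (simp add: norm_mult norm_strip_damping r_def)
    qed
    then show ?thesis by (simp add: exp_minus field_simps)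
  qed
  have "((\<lambda>\<epsilon>. K * exp (\<epsilon> * r)) \<longlongrightarrow> K * exp (0 * r)) (at_right 0)"
    by (intro tendsto_intros)
  moreover have "\<forall>\<^sub>F \<epsilon> in at_right 0. norm (h z0) \<le> K * exp (\<epsilon> * r)"
    using bound eventually_at_right_less[of 0] by (auto elim: eventually_mono)
  ultimately have "norm (h z0) \<le> K * exp (0 * r)"
    by (rule tendsto_lowerbound) simp
  then show ?thesis by simp
qed

section \<open>Quaternions and their slices\<close>

lemma sum_quat_index: "sum g (UNIV::4 set) = g 0 + g 1 + g 2 + g 3"
proof -
  have "(4::4) = 0" by simp
  with sum_4[of g] show ?thesis by (simp add: ac_simps)
qed

lemma quat_eq_iff: "(p::quat) = q \<longleftrightarrow> p$0 = q$0 \<and> p$1 = q$1 \<and> p$2 = q$2 \<and> p$3 = q$3"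
proof -
  have four: "(4::4) = 0" by simp
  have "(\<forall>i::4. P i) \<longleftrightarrow> P 0 \<and> P 1 \<and> P 2 \<and> P 3" for P
    unfolding forall_4 four by blast
  then show ?thesis by (simp add: vec_eq_iff)
qed

lemma norm_quat: "norm (q::quat) = sqrt ((q$0)^2 + (q$1)^2 + (q$2)^2 + (q$3)^2)"
  unfolding norm_vec_def L2_set_def sum_quat_index by (simp add: add.assoc)

lemma qmul_components:
  "qmul p q $ 0 = p$0*q$0 - p$1*q$1 - p$2*q$2 - p$3*q$3"
  "qmul p q $ 1 = p$0*q$1 + p$1*q$0 + p$2*q$3 - p$3*q$2"
  "qmul p q $ 2 = p$0*q$2 - p$1*q$3 + p$2*q$0 + p$3*q$1"
  "qmul p q $ 3 = p$0*q$3 + p$1*q$2 - p$2*q$1 + p$3*q$0"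
  by (simp_all add: qmul_def)

lemma qone_components: "qone$0 = 1" "qone$1 = 0" "qone$2 = 0" "qone$3 = 0"
  by (simp_all add: qone_def)

lemma qmul_assoc: "qmul (qmul p q) r = qmul p (qmul q r)"
  unfolding quat_eq_iff qmul_components by (simp add: algebra_simps)

text \<open>The quaternion norm is multiplicative (Euler's four-square identity).\<close>
lemma norm_qmul: "norm (qmul p q) = norm p * norm q"
proof -
  have "(qmul p q$0)^2 + (qmul p q$1)^2 + (qmul p q$2)^2 + (qmul p q$3)^2
       = ((p$0)^2 + (p$1)^2 + (p$2)^2 + (p$3)^2) * ((q$0)^2 + (q$1)^2 + (q$2)^2 + (q$3)^2)"
    by (simp add: qmul_components power2_eq_square algebra_simps)
  then show ?thesis unfolding norm_quat by (simp add: real_sqrt_mult)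
qed

definition qconj :: "quat \<Rightarrow> quat" where
  "qconj a = (\<chi> n. if n = 0 then a$0 else - (a$n))"

lemma qconj_components: "qconj a $ 0 = a$0" "qconj a $ 1 = - a$1" "qconj a $ 2 = - a$2" "qconj a $ 3 = - a$3"
  by (simp_all add: qconj_def)

lemma norm_qconj: "norm (qconj a) = norm a"
  unfolding norm_quat by (simp add: qconj_components)

lemma imag_unitsD:
  assumes "I \<in> imag_units"
  shows "I$0 = 0" "(I$1)^2 + (I$2)^2 + (I$3)^2 = 1"
  using assms by (auto simp: imag_units_def)

definition slice_emb :: "quat \<Rightarrow> complex \<Rightarrow> quat" where
  "slice_emb I z = slpt I (Re z) (Im z)"

lemma slice_emb_components:
  "slice_emb I z $ 0 = Re z + Im z * I$0" "slice_emb I z $ 1 = Im z * I$1"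
  "slice_emb I z $ 2 = Im z * I$2" "slice_emb I z $ 3 = Im z * I$3"
  by (simp_all add: slice_emb_def slpt_def qone_components)

lemma linear_slice_emb: "linear (slice_emb I)"
  by (rule linearI) (simp_all add: slice_emb_def slpt_def algebra_simps scaleR_add_left)

lemma slice_emb_add: "slice_emb I (z + w) = slice_emb I z + slice_emb I w"
  by (simp add: slice_emb_def slpt_def algebra_simps scaleR_add_left)

lemma slice_emb_of_real_mult: "slice_emb I (of_real s * z) = s *\<^sub>R slice_emb I z"
  by (simp add: slice_emb_def slpt_def scaleR_add_right)

lemma continuous_on_slice_emb: "continuous_on S (slice_emb I)"
  using linear_slice_emb linear_continuous_on linear_conv_bounded_linear by blast

lemma range_slice_emb: "range (slice_emb I) = Lplane I"
  unfolding Lplane_def slice_emb_def by (auto intro!: image_eqI[where x="Complex _ _"])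

lemma norm_slice_emb:
  assumes "I \<in> imag_units"
  shows "norm (slice_emb I z) = cmod z"
proof -
  note I = imag_unitsD[OF assms]
  have "(Re z)^2 + (Im z * I$1)^2 + (Im z * I$2)^2 + (Im z * I$3)^2
      = (Re z)^2 + (Im z)^2 * ((I$1)^2 + (I$2)^2 + (I$3)^2)"
    by (simp add: power_mult_distrib algebra_simps)
  then show ?thesis unfolding norm_quat slice_emb_components I cmod_def by simp
qed

lemma dist_slice_emb:
  assumes "I \<in> imag_units"
  shows "dist (slice_emb I z) (slice_emb I w) = cmod (z - w)"
  by (simp add: dist_norm norm_slice_emb[OF assms] flip: linear_diff[OF linear_slice_emb])

lemma quat_in_some_slice:
  obtains I z where "I \<in> imag_units" "q = slice_emb I z"
proof (cases "(q$1)^2 + (q$2)^2 + (q$3)^2 = 0")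
  case True
  then have q: "q$1 = 0" "q$2 = 0" "q$3 = 0" by (auto simp: add_nonneg_eq_0_iff)
  define I :: quat where "I = (\<chi> i. if i = 1 then 1 else 0)"
  have I: "I$0 = 0" "I$1 = 1" "I$2 = 0" "I$3 = 0" by (simp_all add: I_def)
  have "I \<in> imag_units" by (simp add: imag_units_def I)
  moreover have "q = slice_emb I (of_real (q$0))" by (simp add: quat_eq_iff slice_emb_components q I)
  ultimately show ?thesis using that by blast
next
  case False
  define n where "n = sqrt ((q$1)^2 + (q$2)^2 + (q$3)^2)"
  have "0 < (q$1)^2 + (q$2)^2 + (q$3)^2"
    using False by (metis add_nonneg_nonneg zero_le_power2 order_le_less)
  then have n: "n > 0" "n^2 = (q$1)^2 + (q$2)^2 + (q$3)^2" by (simp_all add: n_def)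
  define I :: quat where "I = (\<chi> i. if i = 0 then 0 else q$i / n)"
  have I: "I$0 = 0" "I$1 = q$1/n" "I$2 = q$2/n" "I$3 = q$3/n" by (simp_all add: I_def)
  have "(q$1/n)^2 + (q$2/n)^2 + (q$3/n)^2 = ((q$1)^2 + (q$2)^2 + (q$3)^2) / n^2"
    by (simp add: power_divide add_divide_distrib)
  then have "I \<in> imag_units" using n False by (simp add: imag_units_def I)
  moreover have "q = slice_emb I (Complex (q$0) n)" using n by (simp add: quat_eq_iff slice_emb_components I)
  ultimately show ?thesis using that by blast
qed

text \<open>This functional transfers slice
  regularity of \<open>f\<close> to holomorphy of a complex-valued function on each slice.\<close>
definition slice_coord :: "quat \<Rightarrow> quat \<Rightarrow> quat \<Rightarrow> complex" where
  "slice_coord I a w =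
     (let v = qmul w (qconj a) in Complex (v$0) (v$1 * I$1 + v$2 * I$2 + v$3 * I$3))"

lemma linear_slice_coord: "linear (slice_coord I a)"
  by (rule linearI)
     (simp_all add: slice_coord_def Let_def qmul_components qconj_components complex_eq_iff algebra_simps)

lemma bounded_linear_slice_coord: "bounded_linear (slice_coord I a)"
  using linear_slice_coord linear_conv_bounded_linear by blast

lemma slice_coord_left_mult_unit:
  assumes "I \<in> imag_units"
  shows "slice_coord I a (qmul I w) = \<i> * slice_coord I a w"
proof -
  note I = imag_unitsD[OF assms]
  show ?thesis
    unfolding slice_coord_def Let_def qmul_assoc
    by (simp add: complex_eq_iff qmul_components qconj_components I(1); use I(2) in algebra)
qed

lemma slice_coord_self: "slice_coord I a a = of_real ((norm a)^2)"
  unfolding slice_coord_def Let_def norm_quat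
  by (simp add: complex_eq_iff qmul_components qconj_components power2_eq_square algebra_simps)

lemma norm_slice_coord_le:
  assumes "I \<in> imag_units"
  shows "cmod (slice_coord I a w) \<le> norm w * norm a"
proof -
  define v where "v = qmul w (qconj a)"
  have "(v$1 * I$1 + v$2 * I$2 + v$3 * I$3)^2 \<le> (v$1)^2 + (v$2)^2 + (v$3)^2"
  proof -
    have "((v$1)^2 + (v$2)^2 + (v$3)^2) * ((I$1)^2 + (I$2)^2 + (I$3)^2) - (v$1 * I$1 + v$2 * I$2 + v$3 * I$3)^2
        = (v$1*I$2 - v$2*I$1)^2 + (v$1*I$3 - v$3*I$1)^2 + (v$2*I$3 - v$3*I$2)^2"
      by (simp add: power2_eq_square algebra_simps)
    then show ?thesis using imag_unitsD(2)[OF assms]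
      by (smt (verit) zero_le_power2 mult_cancel_left1)
  qed
  then have "cmod (slice_coord I a w) \<le> norm v"
    unfolding slice_coord_def Let_def v_def[symmetric] cmod_def norm_quat by simp
  also have "norm v = norm w * norm a" unfolding v_def norm_qmul norm_qconj ..
  finally show ?thesis .
qed

section \<open>Slice regular functions on strip domains\<close>

text \<open>Slice regularity of \<open>f\<close> makes every function \<open>z \<mapsto> slice_coord I a (f (x + yI))\<close>,
  \<open>z = x + iy\<close>, holomorphic: the Cauchy--Riemann equation \<open>D_x = -I D_y\<close> becomes
  complex linearity of the derivative after applying \<open>slice_coord I a\<close>.\<close>
lemma holomorphic_slice_coord_comp:
  assumes sr: "slice_regular \<Omega> f" and I: "I \<in> imag_units"
  shows "(\<lambda>z. slice_coord I a (f (slice_emb I z))) holomorphic_on {z. slice_emb I z \<in> \<Omega>}"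
proof -
  have "open (slice_emb I -` \<Omega>)"
    using sr continuous_on_slice_emb[of UNIV I] by (auto simp: slice_regular_def intro: open_vimage)
  then have "open {z. slice_emb I z \<in> \<Omega>}" by (simp add: vimage_def)
  moreover have "(\<lambda>z. slice_coord I a (f (slice_emb I z))) field_differentiable at z"
    if "slice_emb I z \<in> \<Omega>" for z
  proof -
    have "slpt I (Re z) (Im z) \<in> \<Omega>" using that by (simp add: slice_emb_def)
    then obtain Dx Dy where
        D: "((\<lambda>(s,t). f (slpt I s t)) has_derivative (\<lambda>(h,k). h *\<^sub>R Dx + k *\<^sub>R Dy)) (at (Re z, Im z))"
      and CR: "(1/2::real) *\<^sub>R (Dx + qmul I Dy) = 0"
      using sr I unfolding slice_regular_def by blast
    have Dx: "Dx = - qmul I Dy" using CR by (simp add: eq_neg_iff_add_eq_0)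
    have "((\<lambda>z. (Re z, Im z)) has_derivative (\<lambda>h. (Re h, Im h))) (at z)"
      by (intro bounded_linear_imp_has_derivative bounded_linear_Pair bounded_linear_Re bounded_linear_Im)
    from has_derivative_compose[OF this D]
    have "((\<lambda>z. f (slice_emb I z)) has_derivative (\<lambda>h. Re h *\<^sub>R Dx + Im h *\<^sub>R Dy)) (at z)"
      by (simp add: slice_emb_def)
    from bounded_linear.has_derivative[OF bounded_linear_slice_coord this, of I a]
    have "((\<lambda>z. slice_coord I a (f (slice_emb I z)))
            has_derivative (\<lambda>h. slice_coord I a (Re h *\<^sub>R Dx + Im h *\<^sub>R Dy))) (at z)" .
    moreover have "(\<lambda>h. slice_coord I a (Re h *\<^sub>R Dx + Im h *\<^sub>R Dy)) = (*) (- \<i> * slice_coord I a Dy)"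
    proof
      fix h :: complex
      have "slice_coord I a (Re h *\<^sub>R Dx + Im h *\<^sub>R Dy)
          = Re h *\<^sub>R (- (\<i> * slice_coord I a Dy)) + Im h *\<^sub>R slice_coord I a Dy"
        using linear_slice_coord[of I a] slice_coord_left_mult_unit[OF I]
        by (simp add: Dx linear_add linear_diff linear_scale linear_neg)
      also have "\<dots> = (- \<i> * slice_coord I a Dy) * h"
        by (simp add: complex_eq_iff scaleR_conv_of_real algebra_simps)
      finally show "slice_coord I a (Re h *\<^sub>R Dx + Im h *\<^sub>R Dy) = (- \<i> * slice_coord I a Dy) * h" .
    qed
    ultimately show ?thesis
      unfolding field_differentiable_def has_field_derivative_def by (metis has_derivative_eq_rhs)
  qed
  ultimately show ?thesis by (simp add: holomorphic_on_open field_differentiable_def)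
qed

text \<open>A line in the plane \<open>L_I\<close>, seen through \<open>slice_emb I\<close>, is a rotated and translated
  real axis; hence after a rigid motion of \<open>\<complex>\<close> the distance to it is \<open>|Im \<zeta>|\<close>.\<close>
lemma line_in_slice_coordinates:
  assumes I: "I \<in> imag_units" and "line_in I l"
  obtains p u where "cmod u = 1" "\<And>\<zeta>. infdist (slice_emb I (p + u * \<zeta>)) l = \<bar>Im \<zeta>\<bar>"
proof -
  obtain p0 v where "p0 \<in> Lplane I" "v \<in> Lplane I" "v \<noteq> 0" and l: "l = {p0 + t *\<^sub>R v | t. True}"
    using assms(2) unfolding line_in_def by blast
  then obtain p v' where p0: "p0 = slice_emb I p" and v: "v = slice_emb I v'"
    unfolding range_slice_emb[symmetric] by blast
  have "v' \<noteq> 0" using \<open>v \<noteq> 0\<close> v linear_0[OF linear_slice_emb] by auto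
  define u where "u = v' / of_real (cmod v')"
  have u: "cmod u = 1" using \<open>v' \<noteq> 0\<close> by (simp add: u_def norm_divide)
  have "p0 + t *\<^sub>R v = slice_emb I (p + of_real t * v')" for t
    by (simp add: p0 v slice_emb_add slice_emb_of_real_mult)
  moreover have "of_real t * v' = of_real (t * cmod v') * u" for t
    using \<open>v' \<noteq> 0\<close> by (simp add: u_def)
  moreover have "of_real s * u = of_real (s / cmod v') * v'" for s
    using \<open>v' \<noteq> 0\<close> by (simp add: u_def)
  ultimately have l': "l = {slice_emb I (p + of_real s * u) | s. True}"
    unfolding l by (metis (no_types, opaque_lifting))
  have dist: "dist (slice_emb I (p + u * \<zeta>)) (slice_emb I (p + of_real s * u)) = cmod (\<zeta> - of_real s)"
    for \<zeta> s
    using u by (simp add: dist_slice_emb[OF I] norm_mult flip: right_diff_distrib mult.commute[of u])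
  have "infdist (slice_emb I (p + u * \<zeta>)) l = \<bar>Im \<zeta>\<bar>" for \<zeta>
  proof (rule antisym)
    have "slice_emb I (p + of_real (Re \<zeta>) * u) \<in> l" by (auto simp: l')
    then have "infdist (slice_emb I (p + u * \<zeta>)) l \<le> cmod (\<zeta> - of_real (Re \<zeta>))"
      unfolding dist[symmetric] by (rule infdist_le)
    then show "infdist (slice_emb I (p + u * \<zeta>)) l \<le> \<bar>Im \<zeta>\<bar>"
      by (simp add: cmod_def)
    have "l \<noteq> {}" unfolding l' by blast
    moreover have "\<bar>Im \<zeta>\<bar> \<le> dist (slice_emb I (p + u * \<zeta>)) x" if "x \<in> l" for x
      using that abs_Im_le_cmod[of "\<zeta> - of_real _"] dist by (auto simp: l')
    ultimately show "\<bar>Im \<zeta>\<bar> \<le> infdist (slice_emb I (p + u * \<zeta>)) l"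
      unfolding infdist_def by (auto intro: cINF_greatest)
  qed
  with u that show ?thesis by blast
qed

lemma strip_domain_slice_coordinates:
  assumes "strip_domain_width \<Omega> \<gamma>" and I: "I \<in> imag_units"
  obtains p u b where "cmod u = 1" "0 < b" "2 * b \<le> \<gamma>"
    "\<And>\<zeta>. slice_emb I (p + u * \<zeta>) \<in> \<Omega> \<longleftrightarrow> \<bar>Im \<zeta>\<bar> < b"
proof -
  obtain g l where "g I > 0" "g I \<le> \<gamma>" "line_in I l"
    and slice: "\<Omega> \<inter> Lplane I = {z \<in> Lplane I. infdist z l < g I / 2}"
    using assms unfolding strip_domain_width_def by blast
  obtain p u where u: "cmod u = 1" and infdist: "\<And>\<zeta>. infdist (slice_emb I (p + u * \<zeta>)) l = \<bar>Im \<zeta>\<bar>"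
    using line_in_slice_coordinates[OF I \<open>line_in I l\<close>] by blast
  have "slice_emb I (p + u * \<zeta>) \<in> \<Omega> \<longleftrightarrow> \<bar>Im \<zeta>\<bar> < g I / 2" for \<zeta>
  proof -
    have "slice_emb I (p + u * \<zeta>) \<in> Lplane I" unfolding range_slice_emb[symmetric] by simp
    then have "slice_emb I (p + u * \<zeta>) \<in> \<Omega> \<longleftrightarrow> infdist (slice_emb I (p + u * \<zeta>)) l < g I / 2"
      using slice by blast
    then show ?thesis by (simp add: infdist)
  qed
  with u \<open>g I > 0\<close> \<open>g I \<le> \<gamma>\<close> that[of u "g I / 2" p] show ?thesis by simp
qed

text \<open>A continuous map sending exactly the open strip \<open>|Im \<zeta>| < b\<close> into \<open>S\<close> sends the closed
  strip into the closure of \<open>S\<close>; this gives continuity of the reduced function up to the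
  boundary and identifies boundary values with values on the frontier of \<open>S\<close>.\<close>
lemma strip_closure_to_closure:
  fixes W :: "complex \<Rightarrow> 'a::topological_space"
  assumes "continuous_on UNIV W" "b > 0" and strip: "\<And>\<zeta>. W \<zeta> \<in> S \<longleftrightarrow> \<bar>Im \<zeta>\<bar> < b"
    and "\<bar>Im \<zeta>\<bar> \<le> b"
  shows "W \<zeta> \<in> closure S"
proof -
  have "continuous_on (closure {z. \<bar>Im z\<bar> < b}) W"
    using assms(1) by (rule continuous_on_subset) simp
  moreover have "W ` {z. \<bar>Im z\<bar> < b} \<subseteq> closure S"
    using strip closure_subset by blast
  ultimately have "W ` closure {z. \<bar>Im z\<bar> < b} \<subseteq> closure S"
    by (rule image_closure_subset[OF _ closed_closure])
  then show ?thesis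
    unfolding closure_strip[OF \<open>b > 0\<close>] using \<open>\<bar>Im \<zeta>\<bar> \<le> b\<close> by blast
qed

lemma strip_boundary_to_frontier:
  fixes W :: "complex \<Rightarrow> 'a::topological_space"
  assumes "continuous_on UNIV W" "b > 0" and strip: "\<And>\<zeta>. W \<zeta> \<in> S \<longleftrightarrow> \<bar>Im \<zeta>\<bar> < b"
    and "open S" "\<bar>Im \<zeta>\<bar> = b"
  shows "W \<zeta> \<in> frontier S"
  using strip_closure_to_closure[OF assms(1-3), of \<zeta>] strip[of \<zeta>] assms(4,5)
  by (simp add: frontier_def interior_open)

lemma slice_coord_growth:
  assumes I: "I \<in> imag_units" and u: "cmod u = 1" and "slice_emb I (p + u * \<zeta>) \<in> \<Omega>"
    and growth: "\<forall>q\<in>\<Omega>. norm (f q) \<le> N * exp (exp (k * norm q))" and "N > 0" "k > 0"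
  shows "cmod (slice_coord I a (f (slice_emb I (p + u * \<zeta>))))
           \<le> (N * (norm a + 1)) * exp (exp (k * cmod p) * exp (k * cmod \<zeta>))"
proof -
  define w where "w = slice_emb I (p + u * \<zeta>)"
  have "norm w \<le> cmod p + cmod \<zeta>"
    using norm_triangle_ineq[of p "u * \<zeta>"] by (simp add: w_def norm_slice_emb[OF I] norm_mult u)
  then have "exp (k * norm w) \<le> exp (k * cmod p) * exp (k * cmod \<zeta>)"
    using \<open>k > 0\<close> by (simp add: flip: exp_add distrib_left)
  then have "N * exp (exp (k * norm w)) \<le> N * exp (exp (k * cmod p) * exp (k * cmod \<zeta>))"
    using \<open>N > 0\<close> by simp
  then have "norm (f w) \<le> N * exp (exp (k * cmod p) * exp (k * cmod \<zeta>))"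
    using growth assms(3) unfolding w_def[symmetric] by (blast intro: order_trans)
  then have "norm (f w) * norm a \<le> N * exp (exp (k * cmod p) * exp (k * cmod \<zeta>)) * (norm a + 1)"
    using \<open>N > 0\<close> by (intro mult_mono) auto
  with norm_slice_coord_le[OF I, of a "f w"] show ?thesis
    unfolding w_def[symmetric] by (simp add: algebra_simps)
qed

lemma slice_coord_bound_on_strip:
  assumes sr: "slice_regular \<Omega> f" and cont: "continuous_on (closure \<Omega>) f"
    and I: "I \<in> imag_units" and u: "cmod u = 1" and "b > 0"
    and strip: "\<And>\<zeta>. slice_emb I (p + u * \<zeta>) \<in> \<Omega> \<longleftrightarrow> \<bar>Im \<zeta>\<bar> < b"
    and growth: "\<forall>q\<in>\<Omega>. norm (f q) \<le> N * exp (exp (k * norm q))"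
    and "N > 0" "k > 0" "k * b < pi / 2"
    and boundary: "\<forall>q\<in>frontier \<Omega>. norm (f q) \<le> M" and "M \<ge> 0"
    and "\<bar>Im \<zeta>0\<bar> < b"
  shows "cmod (slice_coord I a (f (slice_emb I (p + u * \<zeta>0)))) \<le> M * norm a"
proof -
  define W where "W \<zeta> = slice_emb I (p + u * \<zeta>)" for \<zeta>
  define h where "h \<zeta> = slice_coord I a (f (W \<zeta>))" for \<zeta>
  have "open \<Omega>" using sr by (simp add: slice_regular_def)
  have contW: "continuous_on UNIV W"
    unfolding W_def by (intro continuous_on_compose2[OF continuous_on_slice_emb] continuous_intros) auto
  have W_strip: "W \<zeta> \<in> \<Omega> \<longleftrightarrow> \<bar>Im \<zeta>\<bar> < b" for \<zeta> unfolding W_def by (rule strip)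
  have "(\<lambda>\<zeta>. p + u * \<zeta>) holomorphic_on {\<zeta>. \<bar>Im \<zeta>\<bar> < b}"
    by (intro holomorphic_intros)
  moreover have "(\<lambda>\<zeta>. p + u * \<zeta>) ` {\<zeta>. \<bar>Im \<zeta>\<bar> < b} \<subseteq> {z. slice_emb I z \<in> \<Omega>}"
    using strip by auto
  moreover have "h = (\<lambda>z. slice_coord I a (f (slice_emb I z))) \<circ> (\<lambda>\<zeta>. p + u * \<zeta>)"
    by (simp add: fun_eq_iff h_def W_def)
  ultimately have hol: "h holomorphic_on {\<zeta>. \<bar>Im \<zeta>\<bar> < b}"
    using holomorphic_on_compose_gen[OF _ holomorphic_slice_coord_comp[OF sr I, of a]] by simp
  have cont_h: "continuous_on {\<zeta>. \<bar>Im \<zeta>\<bar> \<le> b} h"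
    unfolding h_def
    using strip_closure_to_closure[OF contW \<open>b > 0\<close> W_strip]
    by (intro continuous_on_compose2[OF linear_continuous_on[OF bounded_linear_slice_coord]]
              continuous_on_compose2[OF cont] continuous_on_subset[OF contW]) auto
  have h_boundary: "cmod (h \<zeta>) \<le> M * norm a" if "\<bar>Im \<zeta>\<bar> = b" for \<zeta>
  proof -
    have "W \<zeta> \<in> frontier \<Omega>"
      using strip_boundary_to_frontier[OF contW \<open>b > 0\<close> W_strip \<open>open \<Omega>\<close> that] .
    then have "norm (f (W \<zeta>)) * norm a \<le> M * norm a"
      using boundary by (intro mult_right_mono) auto
    with norm_slice_coord_le[OF I] show ?thesis unfolding h_def by (rule order_trans)
  qed
  have h_growth: "cmod (h \<zeta>) \<le> (N * (norm a + 1)) * exp (exp (k * cmod p) * exp (k * cmod \<zeta>))"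
    if "\<bar>Im \<zeta>\<bar> < b" for \<zeta>
    unfolding h_def W_def using that strip
    by (intro slice_coord_growth[OF I u _ growth \<open>N > 0\<close> \<open>k > 0\<close>]) simp
  have "norm a + 1 > 0" by (metis norm_ge_zero add_nonneg_pos zero_less_one)
  with \<open>N > 0\<close> have "N * (norm a + 1) > 0" by simp
  from phragmen_lindelof_strip[OF \<open>b > 0\<close> hol cont_h h_boundary h_growth this _ \<open>k > 0\<close>]
  have "cmod (h \<zeta>0) \<le> M * norm a"
    using \<open>k * b < pi / 2\<close> \<open>M \<ge> 0\<close> \<open>\<bar>Im \<zeta>0\<bar> < b\<close> by simp
  then show ?thesis by (simp add: h_def W_def)
qed

theorem theorem4p8:
  fixes \<Omega> :: "quat set" and f :: "quat \<Rightarrow> quat" and \<gamma> N k M :: real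
  assumes "strip_domain_width \<Omega> \<gamma>"
    and "slice_regular \<Omega> f"
    and "continuous_on (closure \<Omega>) f"
    and "N > 0" and "k > 0" and "k < pi / \<gamma>"
    and "\<forall>q\<in>\<Omega>. norm (f q) \<le> N * exp (exp (k * norm q))"
    and "M \<ge> 0"
    and "\<forall>q\<in>frontier \<Omega>. norm (f q) \<le> M"
  shows "\<forall>q\<in>\<Omega>. norm (f q) \<le> M"
proof
  fix q assume "q \<in> \<Omega>"
  obtain I z where I: "I \<in> imag_units" and q: "q = slice_emb I z"
    by (rule quat_in_some_slice)
  obtain p u b where u: "cmod u = 1" and "0 < b" "2 * b \<le> \<gamma>"
    and strip: "\<And>\<zeta>. slice_emb I (p + u * \<zeta>) \<in> \<Omega> \<longleftrightarrow> \<bar>Im \<zeta>\<bar> < b"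
    using strip_domain_slice_coordinates[OF assms(1) I] by metis
  define \<zeta> where "\<zeta> = (z - p) / u"
  have "u \<noteq> 0" using u by auto
  then have q_\<zeta>: "q = slice_emb I (p + u * \<zeta>)" by (simp add: \<zeta>_def q)
  with strip[of \<zeta>] \<open>q \<in> \<Omega>\<close> have "\<bar>Im \<zeta>\<bar> < b" by simp
  have "\<gamma> > 0" using \<open>0 < b\<close> \<open>2 * b \<le> \<gamma>\<close> by simp
  then have "k * \<gamma> < pi" using assms(6) by (simp add: pos_less_divide_eq)
  moreover have "k * (2 * b) \<le> k * \<gamma>" using assms(5) \<open>2 * b \<le> \<gamma>\<close> by simp
  ultimately have "k * b < pi / 2" by simp
  from slice_coord_bound_on_strip[OF assms(2,3) I u \<open>0 < b\<close> strip assms(7,4,5) this assms(9,8) \<open>\<bar>Im \<zeta>\<bar> < b\<close>]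
  have "cmod (slice_coord I (f q) (f q)) \<le> M * norm (f q)"
    unfolding q_\<zeta> .
  then have "norm (f q) * norm (f q) \<le> M * norm (f q)"
    by (simp add: slice_coord_self power2_eq_square norm_mult)
  then show "norm (f q) \<le> M"
    using \<open>M \<ge> 0\<close> by (cases "f q = 0") (simp_all add: mult_le_cancel_right_pos)
qed

end
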